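(* Let $\alpha_1,\alpha_2,\alpha_3,\alpha_4\in\mathbb{C}$ be pairwise distinct. Let $f:\mathbb{Z}^4\to\mathbb{C}$ be a solution of the discrete potential KdV equation on every elementary square of $\mathbb{Z}^4$, namely $$(f_{i,j}-f)(f_i-f_j)=\alpha_i-\alpha_j\qquad\text{for all } 1\le i<j\le 4,$$ at every vertex. Assume the solution is generic, so that all denominators below are nonzero. Define $$x=\frac{f_1-f_3}{f_2-f_3},\qquad v=\frac{f_1-f_4}{f_2-f_4},$$ $$y=\frac{f_{1,3}-f_{3,4}}{f_{2,3}-f_{3,4}},\qquad u=\frac{f_{1,4}-f_{3,4}}{f_{2,4}-f_{3,4}}.$$ Thus $y$ is the shift of $v$ in direction $3$, and $u$ is the shift of $x$ in direction $4$. Then the following hold. (i) The quantities $x,y,u,v$ are invariant under the three-parameter symmetry group $G$ of the equation, which is generated by $$f\mapsto f+\varepsilon_1,\qquad f\mapsto f\,e^{\varepsilon_2(-1)^{n_1+n_2+n_3+n_4}},\qquad f\mapsto f+\varepsilon_3(-1)^{n_1+n_2+n_3+n_4}.$$ (ii) They are related by the Harrison map: $$u=yQ,\qquad v=xQ^{-1},$$ $$Q=\frac{(1-\gamma_2)+(\gamma_2-\gamma_1)x+\gamma_2(\gamma_1-1)xy}{(1-\gamma_1)+(\gamma_1-\gamma_2)y+\gamma_1(\gamma_2-1)xy},$$ where $$\gamma_1=\frac{\alpha_2-\alpha_3}{\alpha_1-\alpha_3},\qquad \gamma_2=\frac{\alpha_2-\alpha_4}{\alpha_1-\alpha_4}.$$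 (iii) The Harrison map $R(x,y;\gamma_1,\gamma_2)=(yQ,\,xQ^{-1})$ is a Yang–Baxter map, i.e. $$R^{23}(\gamma_2,\gamma_3)R^{13}(\gamma_1,\gamma_3)R^{12}(\gamma_1,\gamma_2)=R^{12}(\gamma_1,\gamma_2)R^{13}(\gamma_1,\gamma_3)R^{23}(\gamma_2,\gamma_3).$$
   Context: Notation: $f=f(n)$, $f_i=f(n+e_i)$, $f_{i,j}=f(n+e_i+e_j)$ for $n=(n_1,\dots,n_4)\in\mathbb{Z}^4$, where $e_i$ are the unit vectors. For a map $R(x,y)=(F(x,y),H(x,y))$ on $\mathbb{X}\times\mathbb{X}$, the map $R^{ij}$ on $\mathbb{X}^3$ acts as $R$ on factors $i<j$, placing $F$ in slot $i$ and $H$ in slot $j$, and as the identity on the remaining factor. It uses the parameters indicated. *)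

theory Defs
  imports Complex_Main
begin

text \<open>Lattice points of Z^4 are represented as functions nat => int supported on {1..4}.\<close>
type_synonym pt = "nat \<Rightarrow> int"

definition Z4 :: "pt set" where
  "Z4 = {n. \<forall>k. k \<notin> {1..4} \<longrightarrow> n k = 0}"

definition sh :: "pt \<Rightarrow> nat \<Rightarrow> pt" where
  "sh n i = (\<lambda>k. if k = i then n k + 1 else n k)"

definition par :: "pt \<Rightarrow> complex" where
  "par n = (if even (n 1 + n 2 + n 3 + n 4) then 1 else -1)"

definition dpKdV :: "(nat \<Rightarrow> complex) \<Rightarrow> (pt \<Rightarrow> complex) \<Rightarrow> bool" where
  "dpKdV \<alpha> f \<longleftrightarrow> (\<forall>n\<in>Z4. \<forall>i j. 1 \<le> i \<and> i < j \<and> j \<le> 4 \<longrightarrow>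
      (f (sh (sh n i) j) - f n) * (f (sh n i) - f (sh n j)) = \<alpha> i - \<alpha> j)"

definition Xq :: "(pt \<Rightarrow> complex) \<Rightarrow> pt \<Rightarrow> complex" where
  "Xq f n = (f (sh n 1) - f (sh n 3)) / (f (sh n 2) - f (sh n 3))"
definition Vq :: "(pt \<Rightarrow> complex) \<Rightarrow> pt \<Rightarrow> complex" where
  "Vq f n = (f (sh n 1) - f (sh n 4)) / (f (sh n 2) - f (sh n 4))"
definition Yq :: "(pt \<Rightarrow> complex) \<Rightarrow> pt \<Rightarrow> complex" where
  "Yq f n = (f (sh (sh n 1) 3) - f (sh (sh n 3) 4)) / (f (sh (sh n 2) 3) - f (sh (sh n 3) 4))"
definition Uq :: "(pt \<Rightarrow> complex) \<Rightarrow> pt \<Rightarrow> complex" where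
  "Uq f n = (f (sh (sh n 1) 4) - f (sh (sh n 3) 4)) / (f (sh (sh n 2) 4) - f (sh (sh n 3) 4))"

definition gen1 :: "complex \<Rightarrow> (pt \<Rightarrow> complex) \<Rightarrow> (pt \<Rightarrow> complex)" where
  "gen1 \<epsilon> f = (\<lambda>n. f n + \<epsilon>)"
definition gen2 :: "complex \<Rightarrow> (pt \<Rightarrow> complex) \<Rightarrow> (pt \<Rightarrow> complex)" where
  "gen2 \<epsilon> f = (\<lambda>n. f n * exp (\<epsilon> * par n))"
definition gen3 :: "complex \<Rightarrow> (pt \<Rightarrow> complex) \<Rightarrow> (pt \<Rightarrow> complex)" where
  "gen3 \<epsilon> f = (\<lambda>n. f n + \<epsilon> * par n)"

text \<open>The group generated (inverses of generators are generators with parameter -\<epsilon>)\<close>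
inductive_set symG :: "((pt \<Rightarrow> complex) \<Rightarrow> (pt \<Rightarrow> complex)) set" where
  symG_id: "id \<in> symG"
| symG_1: "g \<in> symG \<Longrightarrow> gen1 \<epsilon> \<circ> g \<in> symG"
| symG_2: "g \<in> symG \<Longrightarrow> gen2 \<epsilon> \<circ> g \<in> symG"
| symG_3: "g \<in> symG \<Longrightarrow> gen3 \<epsilon> \<circ> g \<in> symG"

definition Qnum :: "complex \<Rightarrow> complex \<Rightarrow> complex \<Rightarrow> complex \<Rightarrow> complex" where
  "Qnum g1 g2 x y = (1 - g2) + (g2 - g1) * x + g2 * (g1 - 1) * x * y"
definition Qden :: "complex \<Rightarrow> complex \<Rightarrow> complex \<Rightarrow> complex \<Rightarrow> complex" where
  "Qden g1 g2 x y = (1 - g1) + (g1 - g2) * y + g1 * (g2 - 1) * x * y"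
definition Qh :: "complex \<Rightarrow> complex \<Rightarrow> complex \<Rightarrow> complex \<Rightarrow> complex" where
  "Qh g1 g2 x y = Qnum g1 g2 x y / Qden g1 g2 x y"

definition Rh :: "complex \<Rightarrow> complex \<Rightarrow> complex \<times> complex \<Rightarrow> complex \<times> complex" where
  "Rh g1 g2 p = (case p of (x, y) \<Rightarrow> (y * Qh g1 g2 x y, x * inverse (Qh g1 g2 x y)))"

definition Rok :: "complex \<Rightarrow> complex \<Rightarrow> complex \<times> complex \<Rightarrow> bool" where
  "Rok g1 g2 p = (case p of (x, y) \<Rightarrow> Qnum g1 g2 x y \<noteq> 0 \<and> Qden g1 g2 x y \<noteq> 0)"

type_synonym trip = "complex \<times> complex \<times> complex"

definition R12 :: "complex \<Rightarrow> complex \<Rightarrow> trip \<Rightarrow> trip" where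
  "R12 a b t = (case t of (x1, x2, x3) \<Rightarrow> (fst (Rh a b (x1, x2)), snd (Rh a b (x1, x2)), x3))"
definition R13 :: "complex \<Rightarrow> complex \<Rightarrow> trip \<Rightarrow> trip" where
  "R13 a b t = (case t of (x1, x2, x3) \<Rightarrow> (fst (Rh a b (x1, x3)), x2, snd (Rh a b (x1, x3))))"
definition R23 :: "complex \<Rightarrow> complex \<Rightarrow> trip \<Rightarrow> trip" where
  "R23 a b t = (case t of (x1, x2, x3) \<Rightarrow> (x1, fst (Rh a b (x2, x3)), snd (Rh a b (x2, x3))))"

definition ok12 :: "complex \<Rightarrow> complex \<Rightarrow> trip \<Rightarrow> bool" where
  "ok12 a b t = (case t of (x1, x2, x3) \<Rightarrow> Rok a b (x1, x2))"
definition ok13 :: "complex \<Rightarrow> complex \<Rightarrow> trip \<Rightarrow> bool" where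
  "ok13 a b t = (case t of (x1, x2, x3) \<Rightarrow> Rok a b (x1, x3))"
definition ok23 :: "complex \<Rightarrow> complex \<Rightarrow> trip \<Rightarrow> bool" where
  "ok23 a b t = (case t of (x1, x2, x3) \<Rightarrow> Rok a b (x2, x3))"

end

theory Submission
  imports Defs
begin

text \<open>
  Every element of \<open>G\<close> acts on each parity class of vertices as an affine map \<open>f \<mapsto> a f + b\<close>
  with \<open>a \<noteq> 0\<close>, and \<open>x, y, u, v\<close> are ratios of differences of values at vertices of a single
  parity class; hence they are invariant.

  The pair \<open>(u, v) = R(x, y)\<close> is
  characterised by \<open>u v = x y\<close> and \<open>Q(x, y) = x / v\<close>, and after clearing denominators both
  relations lie in the ideal generated by the face equations.

  Since \<open>Q(\<gamma>\<^sub>2, \<gamma>\<^sub>1; y, x) = Q(\<gamma>\<^sub>1, \<gamma>\<^sub>2; x, y)\<^sup>-\<^sup>1\<close>, reversing the three factors of \<open>\<complex>\<^sup>3\<close> conjugates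
  the left-hand side of the Yang-Baxter equation with parameters \<open>(\<gamma>\<^sub>3, \<gamma>\<^sub>2, \<gamma>\<^sub>1)\<close> into the
  right-hand side with parameters \<open>(\<gamma>\<^sub>1, \<gamma>\<^sub>2, \<gamma>\<^sub>3)\<close>. It therefore suffices to compute the
  left-hand side in closed form and to observe that this closed form is invariant under the reversal.
\<close>

lemma par_sh: "i \<in> {1..4} \<Longrightarrow> par (sh n i) = - par n"
  unfolding par_def sh_def by (auto simp: even_add)

definition parity_affine :: "((pt \<Rightarrow> complex) \<Rightarrow> pt \<Rightarrow> complex) \<Rightarrow> bool" where
  "parity_affine T \<longleftrightarrow>
     (\<exists>a b. (\<forall>s. a s \<noteq> 0) \<and> (\<forall>f n. T f n = a (par n) * f n + b (par n)))"

lemma symG_parity_affine: "T \<in> symG \<Longrightarrow> parity_affine T"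
proof (induction rule: symG.induct)
  case symG_id
  show ?case
    unfolding parity_affine_def by (intro exI[of _ "\<lambda>_. 1"] exI[of _ "\<lambda>_. 0"]) simp
next
  case (symG_1 g \<epsilon>)
  then obtain a b where "\<forall>s. a s \<noteq> 0" "\<forall>f n. g f n = a (par n) * f n + b (par n)"
    unfolding parity_affine_def by blast
  then show ?case
    unfolding parity_affine_def gen1_def by (intro exI[of _ a] exI[of _ "\<lambda>s. b s + \<epsilon>"]) simp
next
  case (symG_2 g \<epsilon>)
  then obtain a b where "\<forall>s. a s \<noteq> 0" "\<forall>f n. g f n = a (par n) * f n + b (par n)"
    unfolding parity_affine_def by blast
  then show ?case
    unfolding parity_affine_def gen2_def
    by (intro exI[of _ "\<lambda>s. a s * exp (\<epsilon> * s)"] exI[of _ "\<lambda>s. b s * exp (\<epsilon> * s)"])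
      (simp add: algebra_simps)
next
  case (symG_3 g \<epsilon>)
  then obtain a b where "\<forall>s. a s \<noteq> 0" "\<forall>f n. g f n = a (par n) * f n + b (par n)"
    unfolding parity_affine_def by blast
  then show ?case
    unfolding parity_affine_def gen3_def by (intro exI[of _ a] exI[of _ "\<lambda>s. b s + \<epsilon> * s"]) simp
qed

lemma diff_quotient_scale:
  fixes a p q r s :: "'a :: field"
  assumes "a \<noteq> 0"
  shows "(a * p - a * q) / (a * r - a * s) = (p - q) / (r - s)"
  using assms by (simp add: right_diff_distrib[symmetric])

lemma parity_affine_invariants:
  assumes "parity_affine T"
  shows "Xq (T f) n = Xq f n \<and> Yq (T f) n = Yq f n \<and> Uq (T f) n = Uq f n \<and> Vq (T f) n = Vq f n"
proof -
  obtain a b where a: "\<And>s. a s \<noteq> 0" and T: "\<And>f n. T f n = a (par n) * f n + b (par n)"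
    using assms unfolding parity_affine_def by blast
  show ?thesis
    unfolding Xq_def Yq_def Uq_def Vq_def T by (simp add: par_sh diff_quotient_scale a)
qed

lemma Rh_eqI:
  assumes ok: "Rok g1 g2 (x, y)"
    and Q: "Qnum g1 g2 x y * v = Qden g1 g2 x y * x"
    and prod: "u * v = x * y" and v: "v \<noteq> 0"
  shows "Rh g1 g2 (x, y) = (u, v)"
proof -
  have Qh: "Qh g1 g2 x y = x / v"
    using ok Q v unfolding Qh_def Rok_def by (simp add: field_simps)
  have "x \<noteq> 0"
    using ok Q v unfolding Rok_def by auto
  then show ?thesis
    using prod v by (simp add: Rh_def Qh field_simps)
qed

lemma Harrison_of_face_equations:
  fixes f0 f1 f2 f3 f4 f13 f14 f23 f24 f34 a1 a2 a3 a4 :: complex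
  assumes e13: "(f13 - f0) * (f1 - f3) = a1 - a3" and e14: "(f14 - f0) * (f1 - f4) = a1 - a4"
    and e23: "(f23 - f0) * (f2 - f3) = a2 - a3" and e24: "(f24 - f0) * (f2 - f4) = a2 - a4"
    and e34: "(f34 - f0) * (f3 - f4) = a3 - a4"
    and distinct: "a1 \<noteq> a3" "a1 \<noteq> a4" "a2 \<noteq> a3" "a2 \<noteq> a4"
    and generic: "f23 \<noteq> f34" "f24 \<noteq> f34"
    and ok: "Rok ((a2 - a3) / (a1 - a3)) ((a2 - a4) / (a1 - a4))
               ((f1 - f3) / (f2 - f3), (f13 - f34) / (f23 - f34))"
  shows "((f14 - f34) / (f24 - f34), (f1 - f4) / (f2 - f4)) =
    Rh ((a2 - a3) / (a1 - a3)) ((a2 - a4) / (a1 - a4))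
      ((f1 - f3) / (f2 - f3), (f13 - f34) / (f23 - f34))"
proof -
  define x y u v where "x = (f1 - f3) / (f2 - f3)" and "y = (f13 - f34) / (f23 - f34)"
    and "u = (f14 - f34) / (f24 - f34)" and "v = (f1 - f4) / (f2 - f4)"
  define g1 g2 where "g1 = (a2 - a3) / (a1 - a3)" and "g2 = (a2 - a4) / (a1 - a4)"
  have f_distinct: "f1 \<noteq> f4" "f2 \<noteq> f3" "f2 \<noteq> f4"
    using e14 e23 e24 distinct by auto
  then have x: "x * (f2 - f3) = f1 - f3" and y: "y * (f23 - f34) = f13 - f34"
    and u: "u * (f24 - f34) = f14 - f34" and v: "v * (f2 - f4) = f1 - f4"
    and g1: "g1 * (a1 - a3) = a2 - a3" and g2: "g2 * (a1 - a4) = a2 - a4"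
    using distinct generic by (simp_all add: x_def y_def u_def v_def g1_def g2_def)
  have "v \<noteq> 0"
    using f_distinct by (simp add: v_def)
  moreover have "u * v = x * y"
    using e13 e14 e23 e24 e34 x y u v f_distinct(2,3) generic by algebra
  moreover have "Qnum g1 g2 x y * v = Qden g1 g2 x y * x"
    unfolding Qnum_def Qden_def
    using e13 e14 e23 e24 e34 x y v g1 g2 distinct(1,2) f_distinct(2,3) generic(1) by algebra
  ultimately have "Rh g1 g2 (x, y) = (u, v)"
    using ok by (intro Rh_eqI) (simp_all add: x_def y_def g1_def g2_def)
  then show ?thesis
    by (simp add: x_def y_def u_def v_def g1_def g2_def)
qed

lemma dpKdV_Harrison:
  assumes distinct: "inj_on \<alpha> {1..4}" and sol: "dpKdV \<alpha> f" and n: "n \<in> Z4"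
    and generic: "f (sh (sh n 2) 3) \<noteq> f (sh (sh n 3) 4)" "f (sh (sh n 2) 4) \<noteq> f (sh (sh n 3) 4)"
    and ok: "Rok ((\<alpha> 2 - \<alpha> 3) / (\<alpha> 1 - \<alpha> 3)) ((\<alpha> 2 - \<alpha> 4) / (\<alpha> 1 - \<alpha> 4)) (Xq f n, Yq f n)"
  shows "(Uq f n, Vq f n) =
    Rh ((\<alpha> 2 - \<alpha> 3) / (\<alpha> 1 - \<alpha> 3)) ((\<alpha> 2 - \<alpha> 4) / (\<alpha> 1 - \<alpha> 4)) (Xq f n, Yq f n)"
proof -
  have face: "\<And>i j. 1 \<le> i \<Longrightarrow> i < j \<Longrightarrow> j \<le> 4 \<Longrightarrow>
      (f (sh (sh n i) j) - f n) * (f (sh n i) - f (sh n j)) = \<alpha> i - \<alpha> j"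
    using sol n unfolding dpKdV_def by blast
  have "\<alpha> i \<noteq> \<alpha> j" if "i \<in> {1..4}" "j \<in> {1..4}" "i \<noteq> j" for i j
    using distinct that by (meson inj_on_eq_iff)
  then show ?thesis
    using ok unfolding Xq_def Yq_def Uq_def Vq_def
    by (intro Harrison_of_face_equations[where ?f0.0 = "f n"] face generic) auto
qed

lemma Qnum_swap: "Qnum g2 g1 y x = Qden g1 g2 x y"
  unfolding Qnum_def Qden_def by (simp add: algebra_simps)

lemma Qden_swap: "Qden g2 g1 y x = Qnum g1 g2 x y"
  unfolding Qnum_def Qden_def by (simp add: algebra_simps)

lemma Rok_swap: "Rok g2 g1 (y, x) = Rok g1 g2 (x, y)"
  by (auto simp: Rok_def Qnum_swap[of g1 g2 x y] Qden_swap[of g1 g2 x y])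

lemma Rh_swap: "Rh g2 g1 (y, x) = prod.swap (Rh g1 g2 (x, y))"
  by (simp add: Rh_def Qh_def Qnum_swap[of g1 g2 x y] Qden_swap[of g1 g2 x y])

definition rev3 :: "trip \<Rightarrow> trip" where
  "rev3 t = (case t of (x1, x2, x3) \<Rightarrow> (x3, x2, x1))"

lemma rev3_rev3 [simp]: "rev3 (rev3 t) = t"
  by (cases t) (simp add: rev3_def)

lemma R12_rev3 [simp]: "R12 a b (rev3 t) = rev3 (R23 b a t)"
  by (cases t) (simp add: R12_def R23_def rev3_def Rh_swap[of b a])

lemma R13_rev3 [simp]: "R13 a b (rev3 t) = rev3 (R13 b a t)"
  by (cases t) (simp add: R13_def rev3_def Rh_swap[of b a])

lemma R23_rev3 [simp]: "R23 a b (rev3 t) = rev3 (R12 b a t)"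
  by (cases t) (simp add: R12_def R23_def rev3_def Rh_swap[of b a])

lemma ok12_rev3 [simp]: "ok12 a b (rev3 t) = ok23 b a t"
  by (cases t) (simp add: ok12_def ok23_def rev3_def Rok_swap[of b a])

lemma ok13_rev3 [simp]: "ok13 a b (rev3 t) = ok13 b a t"
  by (cases t) (simp add: ok13_def rev3_def Rok_swap[of b a])

lemma ok23_rev3 [simp]: "ok23 a b (rev3 t) = ok12 b a t"
  by (cases t) (simp add: ok12_def ok23_def rev3_def Rok_swap[of b a])

lemma Rh_eq_common_factor:
  assumes ok: "Rok a b (x, y)"
    and num: "Qnum a b x y = c * n / k1" and den: "Qden a b x y = c * d / k2"
  shows "n \<noteq> 0" "d \<noteq> 0" "Rh a b (x, y) = (y * (n * k2) / (d * k1), x * (d * k1) / (n * k2))"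
proof -
  have nz: "c \<noteq> 0" "n \<noteq> 0" "d \<noteq> 0" "k1 \<noteq> 0" "k2 \<noteq> 0"
    using ok num den by (auto simp: Rok_def)
  then show "n \<noteq> 0" "d \<noteq> 0"
    by simp_all
  have "Qh a b x y = (n * k2) / (d * k1)"
    using nz by (simp add: Qh_def num den field_simps)
  then show "Rh a b (x, y) = (y * (n * k2) / (d * k1), x * (d * k1) / (n * k2))"
    using nz by (simp add: Rh_def)
qed

text \<open>
  \<open>yb_num / yb_den\<close> is the factor \<open>Q\<close> of the map \<open>R\<^sup>1\<^sup>3\<close> on the left-hand side of the
  Yang-Baxter equation, with a common factor \<open>\<gamma>\<^sub>1 - 1\<close> cancelled.
\<close>

definition yb_num :: "complex \<Rightarrow> complex \<Rightarrow> complex \<Rightarrow> complex \<Rightarrow> complex \<Rightarrow> complex \<Rightarrow> complex" where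
  "yb_num g1 g2 g3 x1 x2 x3 =
     x1*x2^2*x3*g1*g2*g3 - x1*x2^2*x3*g2*g3 - x1*x2^2*g1*g2 + x1*x2^2*g2*g3 - x1*x2*x3*g1*g3
     + x1*x2*x3*g2*g3 + x1*x2*g1 - x1*x2*g2*g3 - x2*x3*g2*g3 + x2*x3*g3 + x2*g2 - x2*g3 + g3 - 1"

definition yb_den :: "complex \<Rightarrow> complex \<Rightarrow> complex \<Rightarrow> complex \<Rightarrow> complex \<Rightarrow> complex \<Rightarrow> complex" where
  "yb_den g1 g2 g3 x1 x2 x3 =
     x1*x2^2*x3*g1*g2*g3 - x1*x2^2*x3*g1*g2 + x1*x2*x3*g1*g2 - x1*x2*x3*g1*g3 - x1*x2*g1*g2
     + x1*x2*g1 + x2*x3*g1 - x2*x3*g2*g3 - x2*g1 + x2*g2 - x3*g1 + x3*g3 + g1 - 1"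

definition yb_value :: "complex \<Rightarrow> complex \<Rightarrow> complex \<Rightarrow> trip \<Rightarrow> trip" where
  "yb_value g1 g2 g3 t = (case t of (x1, x2, x3) \<Rightarrow>
     let N = yb_num g1 g2 g3 x1 x2 x3; D = yb_den g1 g2 g3 x1 x2 x3;
         N' = yb_num g3 g2 g1 x3 x2 x1; D' = yb_den g3 g2 g1 x3 x2 x1
     in (x3 * N / D, x2 * D * D' / (N * N'), x1 * N' / D'))"

lemma yb_value_rev3: "rev3 (yb_value g3 g2 g1 (rev3 t)) = yb_value g1 g2 g3 t"
  by (cases t) (simp add: yb_value_def rev3_def Let_def mult.commute)

lemma Qnum_R13_after_R12:
  assumes "Qden g1 g2 x1 x2 \<noteq> 0"
  shows "Qnum g1 g3 (x2 * Qnum g1 g2 x1 x2 / Qden g1 g2 x1 x2) x3 =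
    (g1 - 1) * yb_num g1 g2 g3 x1 x2 x3 / Qden g1 g2 x1 x2"
proof -
  have P: "(1 - g3) * Qden g1 g2 x1 x2 + (g3 - g1) * x2 * Qnum g1 g2 x1 x2
      + g3 * (g1 - 1) * x2 * Qnum g1 g2 x1 x2 * x3 = (g1 - 1) * yb_num g1 g2 g3 x1 x2 x3"
    unfolding Qnum_def Qden_def yb_num_def by algebra
  show ?thesis
    unfolding P[symmetric] Qnum_def[of g1 g3] using assms by (simp add: field_simps)
qed

lemma Qden_R13_after_R12:
  assumes "Qden g1 g2 x1 x2 \<noteq> 0"
  shows "Qden g1 g3 (x2 * Qnum g1 g2 x1 x2 / Qden g1 g2 x1 x2) x3 =
    (g1 - 1) * yb_den g1 g2 g3 x1 x2 x3 / Qden g1 g2 x1 x2"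
proof -
  have P: "(1 - g1) * Qden g1 g2 x1 x2 + (g1 - g3) * x3 * Qden g1 g2 x1 x2
      + g1 * (g3 - 1) * x2 * Qnum g1 g2 x1 x2 * x3 = (g1 - 1) * yb_den g1 g2 g3 x1 x2 x3"
    unfolding Qnum_def Qden_def yb_den_def by algebra
  show ?thesis
    unfolding P[symmetric] Qden_def[of g1 g3] using assms by (simp add: field_simps)
qed

lemma Qnum_R23_after_R13_R12:
  fixes g1 g2 g3 x1 x2 x3 :: complex
  defines "NA \<equiv> Qnum g1 g2 x1 x2" and "DA \<equiv> Qden g1 g2 x1 x2"
    and "N \<equiv> yb_num g1 g2 g3 x1 x2 x3" and "D \<equiv> yb_den g1 g2 g3 x1 x2 x3"
  assumes "NA \<noteq> 0" "DA \<noteq> 0" "N \<noteq> 0"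
  shows "Qnum g2 g3 (x1 * DA / NA) (x2 * NA * D / (DA * N)) =
    (g2 - 1) * (g3 - 1) * (1 - g1 * x1 * x2) * (1 - g2 * x1 * x2) * yb_den g3 g2 g1 x3 x2 x1 / (NA * N)"
proof -
  have P: "(1 - g3) * NA * N + (g3 - g2) * x1 * DA * N + g3 * (g2 - 1) * x1 * x2 * D * NA =
      (g2 - 1) * (g3 - 1) * (1 - g1 * x1 * x2) * (1 - g2 * x1 * x2) * yb_den g3 g2 g1 x3 x2 x1"
    unfolding assms(1-4) Qnum_def Qden_def yb_num_def yb_den_def by algebra
  show ?thesis
    unfolding P[symmetric] Qnum_def[of g2 g3] using assms(5-7) by (simp add: field_simps)
qed

lemma Qden_R23_after_R13_R12:
  fixes g1 g2 g3 x1 x2 x3 :: complex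
  defines "NA \<equiv> Qnum g1 g2 x1 x2" and "DA \<equiv> Qden g1 g2 x1 x2"
    and "N \<equiv> yb_num g1 g2 g3 x1 x2 x3" and "D \<equiv> yb_den g1 g2 g3 x1 x2 x3"
  assumes "NA \<noteq> 0" "DA \<noteq> 0" "N \<noteq> 0"
  shows "Qden g2 g3 (x1 * DA / NA) (x2 * NA * D / (DA * N)) =
    (g2 - 1) * (g3 - 1) * (1 - g1 * x1 * x2) * (1 - g2 * x1 * x2) * yb_num g3 g2 g1 x3 x2 x1 / (DA * N)"
proof -
  have P: "(1 - g2) * DA * N + (g2 - g3) * x2 * NA * D + g2 * (g3 - 1) * x1 * x2 * D * DA =
      (g2 - 1) * (g3 - 1) * (1 - g1 * x1 * x2) * (1 - g2 * x1 * x2) * yb_num g3 g2 g1 x3 x2 x1"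
    unfolding assms(1-4) Qnum_def Qden_def yb_num_def yb_den_def by algebra
  show ?thesis
    unfolding P[symmetric] Qden_def[of g2 g3] using assms(5-7) by (simp add: field_simps)
qed

lemma R23_R13_R12_eq_yb_value:
  assumes ok: "ok12 g1 g2 t" "ok13 g1 g3 (R12 g1 g2 t)" "ok23 g2 g3 (R13 g1 g3 (R12 g1 g2 t))"
  shows "R23 g2 g3 (R13 g1 g3 (R12 g1 g2 t)) = yb_value g1 g2 g3 t"
proof -
  obtain x1 x2 x3 where t: "t = (x1, x2, x3)"
    by (cases t)
  let ?NA = "Qnum g1 g2 x1 x2" and ?DA = "Qden g1 g2 x1 x2"
  let ?N = "yb_num g1 g2 g3 x1 x2 x3" and ?D = "yb_den g1 g2 g3 x1 x2 x3"
  have A: "?NA \<noteq> 0" "?DA \<noteq> 0"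
    using ok(1) by (simp_all add: t ok12_def Rok_def)
  then have step1: "R12 g1 g2 t = (x2 * ?NA / ?DA, x1 * ?DA / ?NA, x3)"
    by (simp add: t R12_def Rh_def Qh_def)
  have "Rok g1 g3 (x2 * ?NA / ?DA, x3)"
    using ok(2) by (simp add: step1 ok13_def)
  note R13 = Rh_eq_common_factor[OF this
      Qnum_R13_after_R12[OF A(2)] Qden_R13_after_R12[OF A(2)]]
  have step2: "R13 g1 g3 (R12 g1 g2 t) = (x3 * ?N / ?D, x1 * ?DA / ?NA, x2 * ?NA * ?D / (?DA * ?N))"
    using R13(3) A by (simp add: step1 R13_def mult_ac)
  have "Rok g2 g3 (x1 * ?DA / ?NA, x2 * ?NA * ?D / (?DA * ?N))"
    using ok(3) by (simp add: step2 ok23_def)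
  note R23 = Rh_eq_common_factor[OF this
      Qnum_R23_after_R13_R12[OF A R13(1)] Qden_R23_after_R13_R12[OF A R13(1)]]
  show ?thesis
    unfolding step2 using R23 A R13(1,2) by (simp add: t R23_def yb_value_def Let_def field_simps)
qed

lemma Harrison_Yang_Baxter:
  assumes "ok12 g1 g2 t" "ok13 g1 g3 (R12 g1 g2 t)" "ok23 g2 g3 (R13 g1 g3 (R12 g1 g2 t))"
    and "ok23 g2 g3 t" "ok13 g1 g3 (R23 g2 g3 t)" "ok12 g1 g2 (R13 g1 g3 (R23 g2 g3 t))"
  shows "R23 g2 g3 (R13 g1 g3 (R12 g1 g2 t)) = R12 g1 g2 (R13 g1 g3 (R23 g2 g3 t))"
proof -
  have mirror: "R12 g1 g2 (R13 g1 g3 (R23 g2 g3 t)) =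
      rev3 (R23 g2 g1 (R13 g3 g1 (R12 g3 g2 (rev3 t))))"
    by simp
  have "R23 g2 g1 (R13 g3 g1 (R12 g3 g2 (rev3 t))) = yb_value g3 g2 g1 (rev3 t)"
    using assms(4-6) by (intro R23_R13_R12_eq_yb_value) simp_all
  then show ?thesis
    using R23_R13_R12_eq_yb_value[OF assms(1-3)] by (simp only: mirror yb_value_rev3)
qed

theorem mainTheorem2:
  fixes \<alpha> :: "nat \<Rightarrow> complex" and f :: "pt \<Rightarrow> complex"
  assumes distinct: "inj_on \<alpha> {1..4}"
    and sol: "dpKdV \<alpha> f"
    and generic: "\<forall>n\<in>Z4. f (sh n 2) \<noteq> f (sh n 3) \<and> f (sh n 2) \<noteq> f (sh n 4)
        \<and> f (sh (sh n 2) 3) \<noteq> f (sh (sh n 3) 4) \<and> f (sh (sh n 2) 4) \<noteq> f (sh (sh n 3) 4)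
        \<and> Rok ((\<alpha> 2 - \<alpha> 3) / (\<alpha> 1 - \<alpha> 3)) ((\<alpha> 2 - \<alpha> 4) / (\<alpha> 1 - \<alpha> 4)) (Xq f n, Yq f n)"
  shows "(\<forall>T\<in>symG. \<forall>n\<in>Z4. Xq (T f) n = Xq f n \<and> Yq (T f) n = Yq f n
            \<and> Uq (T f) n = Uq f n \<and> Vq (T f) n = Vq f n)
    \<and> (\<forall>n\<in>Z4. (Uq f n, Vq f n) =
          Rh ((\<alpha> 2 - \<alpha> 3) / (\<alpha> 1 - \<alpha> 3)) ((\<alpha> 2 - \<alpha> 4) / (\<alpha> 1 - \<alpha> 4)) (Xq f n, Yq f n))
    \<and> (\<forall>g1 g2 g3 t.
          ok12 g1 g2 t \<and> ok13 g1 g3 (R12 g1 g2 t) \<and> ok23 g2 g3 (R13 g1 g3 (R12 g1 g2 t))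
          \<and> ok23 g2 g3 t \<and> ok13 g1 g3 (R23 g2 g3 t) \<and> ok12 g1 g2 (R13 g1 g3 (R23 g2 g3 t))
          \<longrightarrow> R23 g2 g3 (R13 g1 g3 (R12 g1 g2 t)) = R12 g1 g2 (R13 g1 g3 (R23 g2 g3 t)))"
  by (intro conjI)
    (use symG_parity_affine parity_affine_invariants in blast,
     use dpKdV_Harrison[OF distinct sol] generic in blast,
     use Harrison_Yang_Baxter in blast)

end
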